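(* Let $m,b\ge1$ and let $\varepsilon:(\mathbb{F}_2)^{mb}\to(\mathbb{F}_2)^{2^m b}$ be defined by $\varepsilon(v_1,\dots,v_b)=(\varepsilon'(v_1),\dots,\varepsilon'(v_b))$ for $v_j\in(\mathbb{F}_2)^m$. Then $\dim_{\mathbb{F}_2}\langle\varepsilon((\mathbb{F}_2)^{mb})\rangle=2^m b-(b-1)$.
   Context: Identify $(\mathbb{F}_2)^m$ with $\mathbb{F}_{2^m}=\mathbb{F}_2[x]/(p)$ for a primitive polynomial $p$ of degree $m$, and let $\gamma$ be a primitive element of $\mathbb{F}_{2^m}$ (a root of $p$). Let $e_1,\dots,e_{2^m}$ be the standard basis of $(\mathbb{F}_2)^{2^m}$, and define $\varepsilon':\mathbb{F}_{2^m}\to(\mathbb{F}_2)^{2^m}$ by $\varepsilon'(0)=e_1$ and $\varepsilon'(\gamma^i)=e_{i+1}$ for $1\le i\le 2^m-1$. $\langle S\rangle$ denotes the $\mathbb{F}_2$-linear span of $S$. *)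

theory Defs
  imports "HOL-Library.Z2" "HOL-Computational_Algebra.Polynomial"
    "HOL-Computational_Algebra.Factorial_Ring" "HOL-Library.Function_Algebras"
begin

text \<open>(F_2)^n is rendered as functions nat => bit vanishing outside the coordinates 0..n-1
  (coordinate k here = coordinate k+1 in the paper).\<close>
definition F2vec :: "nat \<Rightarrow> (nat \<Rightarrow> bit) set" where
  "F2vec n = {v. \<forall>k\<ge>n. v k = 0}"

text \<open>Standard basis vector (0-indexed): std_e i is the paper's e_(i+1).\<close>
definition std_e :: "nat \<Rightarrow> nat \<Rightarrow> bit" where
  "std_e i = (\<lambda>k. if k = i then 1 else 0)"

definition f2scale :: "bit \<Rightarrow> (nat \<Rightarrow> bit) \<Rightarrow> (nat \<Rightarrow> bit)" where
  "f2scale c v = (\<lambda>k. c * v k)"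

definition primitive_poly :: "bit poly \<Rightarrow> nat \<Rightarrow> bool" where
  "primitive_poly p m \<longleftrightarrow> degree p = m \<and> irreducible p \<and>
     [:0, 1:] ^ (2 ^ m - 1) mod p = 1 \<and>
     (\<forall>k. 0 < k \<and> k < 2 ^ m - 1 \<longrightarrow> [:0, 1:] ^ k mod p \<noteq> 1)"

text \<open>Identification of (F_2)^m with F_2[x]/(p) (residues of degree < m):
  (v_0,...,v_(m-1)) corresponds to sum v_k x^k.\<close>
definition vec_to_poly :: "nat \<Rightarrow> (nat \<Rightarrow> bit) \<Rightarrow> bit poly" where
  "vec_to_poly m v = (\<Sum>k<m. monom (v k) k)"

text \<open>epsilon' : F_(2^m) -> (F_2)^(2^m), with gamma = class of x:
  0 goes to e_1, gamma^i goes to e_(i+1) for 1 <= i <= 2^m - 1.\<close>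
definition eps' :: "bit poly \<Rightarrow> bit poly \<Rightarrow> nat \<Rightarrow> bit" where
  "eps' p q = (if q = 0 then std_e 0
     else std_e (THE i. 1 \<le> i \<and> i \<le> 2 ^ degree p - 1 \<and> [:0, 1:] ^ i mod p = q))"

text \<open>Block j of the input is (v (j*m), ..., v (j*m+m-1)); block j of the output
  occupies coordinates j*2^m, ..., j*2^m + 2^m - 1.\<close>
definition eps :: "bit poly \<Rightarrow> nat \<Rightarrow> nat \<Rightarrow> (nat \<Rightarrow> bit) \<Rightarrow> nat \<Rightarrow> bit" where
  "eps p m b v = (\<lambda>k. if k < 2 ^ m * b then
      eps' p (vec_to_poly m (\<lambda>i. v ((k div 2 ^ m) * m + i))) (k mod 2 ^ m) else 0)"

end

(*
  Because the class of x generates the multiplicative group of F_2[x]/(p), the map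
  v \<mapsto> \<epsilon>'(v) is a bijection from (F_2)^m onto the standard basis of (F_2)^(2^m).
  Hence the image of \<epsilon> consists exactly of the vectors having a single 1 in each of
  the b blocks of length N = 2^m. With w the vector that has its 1 at the start of every
  block, these span the same space as w together with the b(N - 1) vectors
  e_(jN) + e_(jN+i), 0 < i < N. The latter are independent, each being the only one
  with a 1 at position jN + i, and w is not in their span because they all have an even
  number of ones in the first block. So the dimension is b(N - 1) + 1.
*)
theory Submission
  imports Defs
begin

interpretation F2: vector_space f2scale
proof unfold_locales
  fix a c :: bit and x y :: "nat \<Rightarrow> bit"
  show "f2scale a (x + y) = f2scale a x + f2scale a y"
    unfolding f2scale_def plus_fun_def by (rule ext) (rule distrib_left)
  show "f2scale (a + c) x = f2scale a x + f2scale c x"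
    unfolding f2scale_def plus_fun_def by (rule ext) (rule distrib_right)
  show "f2scale a (f2scale c x) = f2scale (a * c) x"
    unfolding f2scale_def by (rule ext) (rule mult.assoc[symmetric])
  show "f2scale 1 x = x"
    unfolding f2scale_def by (rule ext) (rule mult_1_left)
qed

lemma sum_fun_apply: "(sum f A :: 'a \<Rightarrow> 'b::comm_monoid_add) k = (\<Sum>a\<in>A. f a k)"
  by (induction A rule: infinite_finite_induct) auto

lemma sum_std_e_lessThan: "(\<Sum>k<N. std_e a k) = (if a < N then 1 else 0)"
  by (simp add: std_e_def)

lemma independent_if_private_coordinates:
  assumes "finite S" and isolated: "\<And>x. x \<in> S \<Longrightarrow> \<exists>k. x k = 1 \<and> (\<forall>y\<in>S - {x}. y k = 0)"
  shows "F2.independent S"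
proof (rule F2.independent_if_scalars_zero[OF \<open>finite S\<close>])
  fix c x assume sum0: "(\<Sum>y\<in>S. f2scale (c y) y) = 0" and "x \<in> S"
  then obtain k where "x k = 1" and others: "\<forall>y\<in>S - {x}. y k = 0"
    using isolated by blast
  have "0 = (\<Sum>y\<in>S. c y * y k)"
    using fun_cong[OF sum0, of k] by (simp add: sum_fun_apply f2scale_def)
  also have "\<dots> = c x * x k + (\<Sum>y\<in>S - {x}. c y * y k)"
    using \<open>finite S\<close> \<open>x \<in> S\<close> by (rule sum.remove)
  also have "(\<Sum>y\<in>S - {x}. c y * y k) = 0"
    using others by simp
  finally show "c x = 0"
    using \<open>x k = 1\<close> by simp
qed

lemma subspace_zero_block_sum: "F2.subspace {x. (\<Sum>k<N. x k) = 0}"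
  unfolding F2.subspace_def f2scale_def plus_fun_def
  by (simp add: sum.distrib sum_distrib_left[symmetric] del: add_bit_eq_xor mult_bit_eq_and)

definition block_indicator :: "nat \<Rightarrow> nat \<Rightarrow> (nat \<Rightarrow> nat) \<Rightarrow> nat \<Rightarrow> bit" where
  "block_indicator N b f = (\<lambda>k. if k < N * b \<and> k mod N = f (k div N) then 1 else 0)"

definition block_diff :: "nat \<Rightarrow> nat \<Rightarrow> nat \<Rightarrow> nat \<Rightarrow> bit" where
  "block_diff N j i = std_e (j * N) + std_e (j * N + i)"

lemma less_mult_iff_div_less: "0 < (N::nat) \<Longrightarrow> k < N * b \<longleftrightarrow> k div N < b"
  by (simp add: div_less_iff_less_mult mult.commute)

lemma block_indicator_apply:
  "0 < N \<Longrightarrow> block_indicator N b f k = (if k div N < b \<and> k mod N = f (k div N) then 1 else 0)"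
  by (simp add: block_indicator_def less_mult_iff_div_less)

lemma block_diff_apply:
  assumes "0 < i" "i < N"
  shows "block_diff N j i k = (if k div N = j \<and> (k mod N = 0 \<or> k mod N = i) then 1 else 0)"
proof -
  have pos: "k = j * N + r \<longleftrightarrow> k div N = j \<and> k mod N = r" if "r < N" for r
    using that by auto
  then have "k = j * N \<longleftrightarrow> k div N = j \<and> k mod N = 0"
    using pos[of 0] assms by simp
  with pos show ?thesis
    using assms by (auto simp: block_diff_def std_e_def)
qed

lemma block_diff_at_block_position:
  assumes "0 < i" "i < N" "0 < i'" "i' < N"
  shows "block_diff N j' i' (j * N + i) = (if j' = j \<and> i' = i then 1 else 0)"
  using assms by (auto simp: block_diff_apply)

lemma block_indicator_eq_sum_block_diff:
  assumes "0 < N" and "\<forall>j<b. f j < N"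
  shows "block_indicator N b f
    = block_indicator N b (\<lambda>_. 0) + (\<Sum>j | j < b \<and> f j \<noteq> 0. block_diff N j (f j))"
proof
  fix k
  define q r where "q = k div N" and "r = k mod N"
  have "(\<Sum>j | j < b \<and> f j \<noteq> 0. block_diff N j (f j)) k
      = (\<Sum>j<b. if f j \<noteq> 0 then block_diff N j (f j) k else 0)"
    using sum.inter_filter[of "{..<b}" "\<lambda>j. block_diff N j (f j) k" "\<lambda>j. f j \<noteq> 0"]
    by (simp add: sum_fun_apply)
  also have "\<dots> = (\<Sum>j<b. if j = q then (if f q \<noteq> 0 \<and> (r = 0 \<or> r = f q) then 1 else 0) else 0)"
    using assms by (intro sum.cong) (auto simp: block_diff_apply q_def r_def)
  finally have "(\<Sum>j | j < b \<and> f j \<noteq> 0. block_diff N j (f j)) k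
      = (if q < b \<and> f q \<noteq> 0 \<and> (r = 0 \<or> r = f q) then 1 else 0)"
    by simp
  then show "block_indicator N b f k
      = (block_indicator N b (\<lambda>_. 0) + (\<Sum>j | j < b \<and> f j \<noteq> 0. block_diff N j (f j))) k"
    using assms by (auto simp: block_indicator_apply q_def[symmetric] r_def[symmetric])
qed

lemma block_diff_eq_sum_block_indicators:
  assumes "j < b" "0 < i" "i < N"
  shows "block_diff N j i = block_indicator N b (\<lambda>_. 0) + block_indicator N b ((\<lambda>_. 0)(j := i))"
  using assms by (auto simp: block_diff_apply block_indicator_apply)

definition block_diffs :: "nat \<Rightarrow> nat \<Rightarrow> (nat \<Rightarrow> bit) set" where
  "block_diffs N b = {block_diff N j i | j i. j < b \<and> 0 < i \<and> i < N}"

lemma finite_block_diffs: "finite (block_diffs N b)"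
proof (rule finite_subset)
  show "block_diffs N b \<subseteq> (\<lambda>(j, i). block_diff N j i) ` ({..<b} \<times> {..<N})"
    by (auto simp: block_diffs_def)
qed simp

lemma independent_block_diffs: "F2.independent (block_diffs N b)"
proof (rule independent_if_private_coordinates[OF finite_block_diffs])
  fix x assume "x \<in> block_diffs N b"
  then obtain j i where i: "0 < i" "i < N" and x: "x = block_diff N j i"
    by (auto simp: block_diffs_def)
  have "y (j * N + i) = 0" if "y \<in> block_diffs N b - {x}" for y
  proof -
    from that obtain j' i' where "0 < i'" "i' < N" "y = block_diff N j' i'" "y \<noteq> x"
      by (auto simp: block_diffs_def)
    with i x show ?thesis
      by (auto simp: block_diff_at_block_position)
  qed
  moreover have "x (j * N + i) = 1"
    using i x by (simp add: block_diff_at_block_position)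
  ultimately show "\<exists>k. x k = 1 \<and> (\<forall>y\<in>block_diffs N b - {x}. y k = 0)"
    by blast
qed

lemma block_indicator_zero_notin_span_block_diffs:
  assumes "0 < N" "0 < b"
  shows "block_indicator N b (\<lambda>_. 0) \<notin> F2.span (block_diffs N b)"
proof
  have "F2.span (block_diffs N b) \<subseteq> {x. (\<Sum>k<N. x k) = 0}"
  proof (rule F2.span_minimal[OF _ subspace_zero_block_sum], rule subsetI)
    fix x assume "x \<in> block_diffs N b"
    then obtain j i where i: "0 < i" "i < N" and x: "x = block_diff N j i"
      by (auto simp: block_diffs_def)
    have "(\<Sum>k<N. x k) = (if j * N < N then 1 else 0) + (if j * N + i < N then 1 else 0)"
      by (simp add: x block_diff_def plus_fun_def sum.distrib sum_std_e_lessThan del: add_bit_eq_xor)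
    with i show "x \<in> {x. (\<Sum>k<N. x k) = 0}"
      by (cases j) auto
  qed
  moreover have "(\<Sum>k<N. block_indicator N b (\<lambda>_. 0) k) = 1"
    using assms by (simp add: block_indicator_apply)
  moreover assume "block_indicator N b (\<lambda>_. 0) \<in> F2.span (block_diffs N b)"
  ultimately show False
    by auto
qed

lemma card_block_diffs:
  assumes "0 < N"
  shows "card (block_diffs N b) = b * (N - 1)"
proof -
  have "inj_on (\<lambda>(j, i). block_diff N j i) ({..<b} \<times> {1..<N})"
  proof (rule inj_onI, clarify)
    fix j i j' i' assume "i \<in> {1..<N}" "i' \<in> {1..<N}" and "block_diff N j i = block_diff N j' i'"
    moreover have "block_diff N j i (j * N + i) = 1"
      using \<open>i \<in> {1..<N}\<close> by (simp add: block_diff_at_block_position)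
    ultimately have "block_diff N j' i' (j * N + i) = 1"
      by simp
    with \<open>i \<in> {1..<N}\<close> \<open>i' \<in> {1..<N}\<close> show "j = j' \<and> i = i'"
      by (auto simp: block_diff_at_block_position split: if_splits)
  qed
  moreover have "block_diffs N b = (\<lambda>(j, i). block_diff N j i) ` ({..<b} \<times> {1..<N})"
    by (force simp: block_diffs_def)
  ultimately show ?thesis
    by (simp add: card_image)
qed

lemma span_block_indicators:
  assumes "0 < N"
  shows "F2.span {block_indicator N b f | f. \<forall>j<b. f j < N}
    = F2.span (insert (block_indicator N b (\<lambda>_. 0)) (block_diffs N b))"
    (is "F2.span ?E = F2.span ?B")
proof -
  have "x \<in> F2.span ?E" if "x \<in> ?B" for x
  proof -
    have "block_indicator N b (\<lambda>_. 0) \<in> ?E"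
      using assms by auto
    moreover have "block_diff N j i \<in> F2.span ?E" if "j < b" "0 < i" "i < N" for j i
    proof -
      have "block_indicator N b ((\<lambda>_. 0)(j := i)) \<in> ?E"
        using that assms by auto
      moreover have "block_indicator N b (\<lambda>_. 0) \<in> ?E"
        using assms by auto
      ultimately show ?thesis
        unfolding block_diff_eq_sum_block_indicators[OF that]
        by (intro F2.span_add F2.span_base)
    qed
    ultimately show ?thesis
      using \<open>x \<in> ?B\<close> by (auto simp: block_diffs_def intro: F2.span_base)
  qed
  moreover have "x \<in> F2.span ?B" if "x \<in> ?E" for x
  proof -
    from that obtain f where f: "\<forall>j<b. f j < N" and x: "x = block_indicator N b f"
      by blast
    have "block_diff N j (f j) \<in> ?B" if "j < b" "f j \<noteq> 0" for j
      using that f by (auto simp: block_diffs_def)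
    then show ?thesis
      unfolding x block_indicator_eq_sum_block_diff[OF assms f]
      by (intro F2.span_add F2.span_sum F2.span_base) auto
  qed
  ultimately show ?thesis
    unfolding F2.span_eq by blast
qed

lemma dim_span_block_indicators:
  assumes "0 < N" "0 < b"
  shows "F2.dim (F2.span {block_indicator N b f | f. \<forall>j<b. f j < N}) = Suc (b * (N - 1))"
proof -
  have "F2.independent (insert (block_indicator N b (\<lambda>_. 0)) (block_diffs N b))"
    using assms
    by (intro F2.independent_insertI independent_block_diffs block_indicator_zero_notin_span_block_diffs)
  moreover have "block_indicator N b (\<lambda>_. 0) \<notin> block_diffs N b"
    using block_indicator_zero_notin_span_block_diffs[OF assms] F2.span_base by blast
  ultimately show ?thesis
    using assms
    by (simp add: span_block_indicators F2.dim_eq_card_independent card_block_diffs finite_block_diffs)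
qed

lemma card_polys_degree_less:
  assumes "0 < m" and "finite (UNIV :: 'a::zero set)"
  shows "card {q :: 'a poly. degree q < m} = card (UNIV :: 'a set) ^ m"
proof -
  have "bij_betw Poly {xs. set xs \<subseteq> UNIV \<and> length xs = m} {q :: 'a poly. degree q < m}"
    unfolding bij_betw_def
  proof (intro conjI inj_onI subset_antisym subsetI)
    fix xs ys :: "'a list"
    assume "xs \<in> {xs. set xs \<subseteq> UNIV \<and> length xs = m}" "ys \<in> {xs. set xs \<subseteq> UNIV \<and> length xs = m}"
      and "Poly xs = Poly ys"
    then show "xs = ys"
      by (metis (mono_tags, lifting) coeff_Poly_eq mem_Collect_eq nth_default_nth nth_equalityI)
  next
    fix q assume "q \<in> Poly ` {xs. set xs \<subseteq> UNIV \<and> length xs = m}"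
    then obtain xs where "length xs = m" "q = Poly xs"
      by blast
    then have "degree q \<le> m - 1"
      by (intro degree_le) (auto simp: nth_default_beyond)
    with \<open>0 < m\<close> show "q \<in> {q. degree q < m}"
      by simp
  next
    fix q :: "'a poly" assume "q \<in> {q. degree q < m}"
    then have "length (coeffs q) \<le> m"
      by (cases "q = 0") (auto simp: length_coeffs_degree)
    then have "coeffs q @ replicate (m - length (coeffs q)) 0 \<in> {xs. set xs \<subseteq> UNIV \<and> length xs = m}"
      by simp
    moreover have "q = Poly (coeffs q @ replicate (m - length (coeffs q)) 0)"
      by simp
    ultimately show "q \<in> Poly ` {xs. set xs \<subseteq> UNIV \<and> length xs = m}"
      by blast
  qed
  then show ?thesis
    using card_lists_length_eq[OF assms(2), of m] by (simp add: bij_betw_same_card)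
qed

lemma power_mod_neq_zero:
  fixes x p :: "'a::euclidean_semiring_cancel"
  assumes "x ^ e mod p = 1" and "i \<le> e"
  shows "x ^ i mod p \<noteq> 0"
proof
  assume "x ^ i mod p = 0"
  have "1 = x ^ e mod p"
    using assms(1) by simp
  also have "\<dots> = (x ^ i * x ^ (e - i)) mod p"
    using assms(2) by (simp flip: power_add)
  also have "\<dots> = ((x ^ i mod p) * x ^ (e - i)) mod p"
    by (rule mod_mult_left_eq[symmetric])
  also have "\<dots> = 0"
    using \<open>x ^ i mod p = 0\<close> by simp
  finally show False
    by simp
qed

lemma inj_on_power_mod:
  fixes x p :: "'a::euclidean_semiring_cancel"
  assumes one: "x ^ e mod p = 1" and least: "\<And>k. 0 < k \<Longrightarrow> k < e \<Longrightarrow> x ^ k mod p \<noteq> 1"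
  shows "inj_on (\<lambda>i. x ^ i mod p) {1..e}"
proof -
  have neq: "x ^ i mod p \<noteq> x ^ j mod p" if "1 \<le> i" "i < j" "j \<le> e" for i j
  proof
    assume eq: "x ^ i mod p = x ^ j mod p"
    have "x ^ (j - i) mod p = (x ^ e * x ^ (j - i)) mod p"
      using mod_mult_left_eq[of "x ^ e" p "x ^ (j - i)"] one by simp
    also have "x ^ e * x ^ (j - i) = x ^ j * x ^ (e - i)"
      using that by (simp flip: power_add add: add.commute)
    also have "(x ^ j * x ^ (e - i)) mod p = (x ^ i * x ^ (e - i)) mod p"
      using eq by (intro mod_mult_cong) simp_all
    also have "x ^ i * x ^ (e - i) = x ^ e"
      using that by (simp flip: power_add)
    finally have "x ^ (j - i) mod p = 1"
      using one by simp
    moreover have "0 < j - i" "j - i < e"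
      using that by simp_all
    ultimately show False
      using least by blast
  qed
  show ?thesis
  proof (rule inj_onI)
    fix i j assume "i \<in> {1..e}" "j \<in> {1..e}" "x ^ i mod p = x ^ j mod p"
    with neq[of i j] neq[of j i] show "i = j"
      by (cases i j rule: linorder_cases) auto
  qed
qed

lemma UNIV_bit: "(UNIV :: bit set) = {0, 1}"
  using bit_not_zero_iff by blast

lemma eps'_zero: "eps' p 0 = std_e 0"
  by (simp add: eps'_def)

lemma coeff_vec_to_poly: "coeff (vec_to_poly m v) k = (if k < m then v k else 0)"
  unfolding vec_to_poly_def coeff_sum by simp

lemma range_vec_to_poly:
  assumes "0 < m"
  shows "range (vec_to_poly m) = {q. degree q < m}"
proof (intro subset_antisym subsetI)
  fix q assume "q \<in> range (vec_to_poly m)"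
  with assms show "q \<in> {q. degree q < m}"
    unfolding vec_to_poly_def
    by (auto intro!: degree_sum_less le_less_trans[OF degree_monom_le])
next
  fix q :: "bit poly" assume "q \<in> {q. degree q < m}"
  then have "vec_to_poly m (coeff q) = q"
    by (intro poly_eqI) (auto simp: coeff_vec_to_poly coeff_eq_0)
  then show "q \<in> range (vec_to_poly m)"
    by (metis rangeI)
qed

context
  fixes p :: "bit poly" and m :: nat
  assumes m_pos: "0 < m" and primitive: "primitive_poly p m"
begin

lemma primitive_poly_degree: "degree p = m"
  using primitive by (simp add: primitive_poly_def)

lemma power_mod_primitive_poly_order: "[:0, 1:] ^ (2 ^ m - 1) mod p = 1"
  using primitive by (simp add: primitive_poly_def)

lemma inj_on_power_mod_primitive_poly: "inj_on (\<lambda>i. [:0, 1:] ^ i mod p) {1..2 ^ m - 1}"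
  using primitive unfolding primitive_poly_def
  by (intro inj_on_power_mod[OF power_mod_primitive_poly_order]) blast

lemma power_mod_primitive_poly_image:
  "(\<lambda>i. [:0, 1:] ^ i mod p) ` {1..2 ^ m - 1} = {q. degree q < m} - {0}"
proof (rule card_subset_eq)
  have card_residues: "card {q :: bit poly. degree q < m} = 2 ^ m"
    using card_polys_degree_less[OF m_pos, where 'a = bit] by (simp add: UNIV_bit numeral_2_eq_2)
  then show "finite ({q :: bit poly. degree q < m} - {0})"
    by (simp add: card_ge_0_finite)
  have "[:0, 1:] ^ i mod p \<in> {q. degree q < m} - {0}" if "i \<in> {1..2 ^ m - 1}" for i
  proof -
    have "[:0, 1:] ^ i mod p \<noteq> 0"
      using that by (intro power_mod_neq_zero[OF power_mod_primitive_poly_order]) simp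
    moreover have "p \<noteq> 0"
      using m_pos primitive_poly_degree by auto
    ultimately show ?thesis
      using degree_mod_less' primitive_poly_degree by auto
  qed
  then show "(\<lambda>i. [:0, 1:] ^ i mod p) ` {1..2 ^ m - 1} \<subseteq> {q. degree q < m} - {0}"
    by (rule image_subsetI)
  have "card ((\<lambda>i. [:0, 1:] ^ i mod p) ` {1..2 ^ m - 1}) = 2 ^ m - 1"
    using inj_on_power_mod_primitive_poly by (simp add: card_image)
  moreover have "card ({q :: bit poly. degree q < m} - {0}) = 2 ^ m - 1"
    using card_residues m_pos by (simp add: card_Diff_singleton)
  ultimately show "card ((\<lambda>i. [:0, 1:] ^ i mod p) ` {1..2 ^ m - 1}) = card ({q :: bit poly. degree q < m} - {0})"
    by simp
qed

lemma eps'_power_mod: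
  assumes "i \<in> {1..2 ^ m - 1}"
  shows "eps' p ([:0, 1:] ^ i mod p) = std_e i"
proof -
  have "(THE j. 1 \<le> j \<and> j \<le> 2 ^ degree p - 1 \<and> [:0, 1:] ^ j mod p = [:0, 1:] ^ i mod p) = i"
  proof (rule the_equality)
    show "1 \<le> i \<and> i \<le> 2 ^ degree p - 1 \<and> [:0, 1:] ^ i mod p = [:0, 1:] ^ i mod p"
      using assms by (simp add: primitive_poly_degree)
  next
    fix j assume "1 \<le> j \<and> j \<le> 2 ^ degree p - 1 \<and> [:0, 1:] ^ j mod p = [:0, 1:] ^ i mod p"
    then show "j = i"
      using assms inj_on_power_mod_primitive_poly
      by (intro inj_onD[of "\<lambda>i. [:0, 1:] ^ i mod p"]) (auto simp: primitive_poly_degree)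
  qed
  moreover have "[:0, 1:] ^ i mod p \<noteq> 0"
    using assms by (intro power_mod_neq_zero[OF power_mod_primitive_poly_order]) simp
  ultimately show ?thesis
    by (simp add: eps'_def)
qed

lemma range_eps'_vec_to_poly: "range (\<lambda>v. eps' p (vec_to_poly m v)) = std_e ` {..<2 ^ m}"
proof -
  have "range (\<lambda>v. eps' p (vec_to_poly m v)) = eps' p ` range (vec_to_poly m)"
    by (simp only: image_image)
  also have "range (vec_to_poly m) = insert 0 ((\<lambda>i. [:0, 1:] ^ i mod p) ` {1..2 ^ m - 1})"
    unfolding range_vec_to_poly[OF m_pos] power_mod_primitive_poly_image using m_pos by auto
  also have "eps' p ` \<dots> = insert (eps' p 0) ((\<lambda>i. eps' p ([:0, 1:] ^ i mod p)) ` {1..2 ^ m - 1})"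
    by (simp only: image_insert image_image)
  also have "(\<lambda>i. eps' p ([:0, 1:] ^ i mod p)) ` {1..2 ^ m - 1} = std_e ` {1..2 ^ m - 1}"
    by (rule image_cong[OF refl]) (rule eps'_power_mod)
  also have "insert (eps' p 0) (std_e ` {1..2 ^ m - 1}) = std_e ` {..<2 ^ m}"
  proof -
    have "{..<2 ^ m} = insert 0 {1..2 ^ m - 1 :: nat}"
      by (auto simp: Suc_le_eq)
    then show ?thesis
      by (simp add: eps'_zero)
  qed
  finally show ?thesis .
qed

lemma eps'_vec_to_poly_std_e: "\<exists>i<2 ^ m. eps' p (vec_to_poly m v) = std_e i"
proof -
  have "eps' p (vec_to_poly m v) \<in> range (\<lambda>v. eps' p (vec_to_poly m v))"
    by (rule rangeI)
  then show ?thesis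
    unfolding range_eps'_vec_to_poly by blast
qed

lemma std_e_eps'_vec_to_poly:
  assumes "i < 2 ^ m"
  shows "\<exists>v. eps' p (vec_to_poly m v) = std_e i"
proof -
  have "std_e i \<in> range (\<lambda>v. eps' p (vec_to_poly m v))"
    unfolding range_eps'_vec_to_poly using assms by blast
  then show ?thesis
    by (metis rangeE)
qed

end

lemma vec_to_poly_cong: "(\<And>k. k < m \<Longrightarrow> v k = w k) \<Longrightarrow> vec_to_poly m v = vec_to_poly m w"
  unfolding vec_to_poly_def by (intro sum.cong) auto

lemma eps_eq_block_indicator:
  assumes "\<forall>j<b. eps' p (vec_to_poly m (\<lambda>i. v (j * m + i))) = std_e (f j)"
  shows "eps p m b v = block_indicator (2 ^ m) b f"
proof
  fix k
  show "eps p m b v k = block_indicator (2 ^ m) b f k"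
  proof (cases "k < 2 ^ m * b")
    case True
    then have "k div 2 ^ m < b"
      using less_mult_iff_div_less[of "2 ^ m" k b] by simp
    with True assms show ?thesis
      by (simp add: eps_def block_indicator_def std_e_def)
  next
    case False
    then show ?thesis
      by (simp add: eps_def block_indicator_def)
  qed
qed

lemma image_eps:
  assumes "0 < m" and "primitive_poly p m"
  shows "eps p m b ` F2vec (m * b) = {block_indicator (2 ^ m) b f | f. \<forall>j<b. f j < 2 ^ m}"
proof (intro subset_antisym subsetI)
  fix x assume "x \<in> eps p m b ` F2vec (m * b)"
  then obtain v where x: "x = eps p m b v"
    by blast
  have "\<forall>j. \<exists>i<2 ^ m. eps' p (vec_to_poly m (\<lambda>i. v (j * m + i))) = std_e i"
    using eps'_vec_to_poly_std_e[OF assms] by blast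
  then obtain f where f: "\<forall>j. f j < 2 ^ m \<and> eps' p (vec_to_poly m (\<lambda>i. v (j * m + i))) = std_e (f j)"
    by metis
  then have "x = block_indicator (2 ^ m) b f"
    unfolding x by (intro eps_eq_block_indicator) blast
  with f show "x \<in> {block_indicator (2 ^ m) b f | f. \<forall>j<b. f j < 2 ^ m}"
    by blast
next
  fix x assume "x \<in> {block_indicator (2 ^ m) b f | f. \<forall>j<b. f j < 2 ^ m}"
  then obtain f where f: "\<forall>j<b. f j < 2 ^ m" and x: "x = block_indicator (2 ^ m) b f"
    by blast
  have "\<forall>i. \<exists>w. i < 2 ^ m \<longrightarrow> eps' p (vec_to_poly m w) = std_e i"
    using std_e_eps'_vec_to_poly[OF assms] by blast
  then obtain w where w: "\<And>i. i < 2 ^ m \<Longrightarrow> eps' p (vec_to_poly m (w i)) = std_e i"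
    by metis
  define v where "v k = (if k < m * b then w (f (k div m)) (k mod m) else 0)" for k
  have "vec_to_poly m (\<lambda>i. v (j * m + i)) = vec_to_poly m (w (f j))" if "j < b" for j
  proof (rule vec_to_poly_cong)
    fix i assume "i < m"
    moreover have "j * m + i < m * b"
      using \<open>i < m\<close> \<open>j < b\<close> less_mult_iff_div_less[of m "j * m + i" b] by simp
    ultimately show "v (j * m + i) = w (f j) i"
      by (simp add: v_def)
  qed
  then have "eps p m b v = x"
    unfolding x using f w by (intro eps_eq_block_indicator) simp
  moreover have "v \<in> F2vec (m * b)"
    by (simp add: F2vec_def v_def)
  ultimately show "x \<in> eps p m b ` F2vec (m * b)"
    by blast
qed

theorem mainTheorem5:
  fixes p :: "bit poly" and m b :: nat
  assumes "m \<ge> 1" and "b \<ge> 1" and "primitive_poly p m"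
  shows "vector_space.dim f2scale (module.span f2scale (eps p m b ` F2vec (m * b)))
           = 2 ^ m * b - (b - 1)"
proof -
  have "0 < m"
    using \<open>m \<ge> 1\<close> by simp
  then have "F2.dim (F2.span (eps p m b ` F2vec (m * b))) = Suc (b * (2 ^ m - 1))"
    unfolding image_eps[OF \<open>0 < m\<close> \<open>primitive_poly p m\<close>] using \<open>b \<ge> 1\<close>
    by (intro dim_span_block_indicators) simp_all
  also have "\<dots> = 2 ^ m * b - (b - 1)"
  proof -
    have "b \<le> b * 2 ^ m"
      by simp
    then show ?thesis
      using \<open>b \<ge> 1\<close> by (simp add: diff_mult_distrib2 mult.commute Suc_diff_le)
  qed
  finally show ?thesis .
qed

end
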